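(* Let $m\ge2$. For $\beta\in(\mathcal{G}(m),\beta_f(m)]$ one has $|S_{\beta,m}|=1$ if $m$ is even and $|S_{\beta,m}|=2$ if $m$ is odd; and $|S_{\beta,m}|\ge\aleph_0$ for $\beta\in(\beta_f(m),m+1]$.
   Context: For $\beta\in(1,m+1]$ and $x\in[0,\frac{m}{\beta-1}]$, $\Sigma_{\beta,m}(x)=\{(\epsilon_i)\in\{0,\ldots,m\}^{\mathbb{N}}:\sum_{i\ge1}\epsilon_i\beta^{-i}=x\}$. $W_{\beta,m}=\{x\in(\frac{m+1-\beta}{\beta-1},1):|\Sigma_{\beta,m}(x)|=1\}$ and $S_{\beta,m}=\{(\epsilon_i)\in\{0,\ldots,m\}^{\mathbb{N}}:\sum_{i\ge1}\epsilon_i\beta^{-i}\in W_{\beta,m}\}$. $\mathcal{G}(m)=k+1$ if $m=2k$ and $\mathcal{G}(m)=\frac{k+1+\sqrt{k^2+6k+5}}{2}$ if $m=2k+1$. $\beta_f(m)=\frac{k+1+\sqrt{k^2+6k+1}}{2}$ if $m=2k$, and $\beta_f(m)$ is the largest real root of $x^3-(k+2)x^2+x-(k+1)=0$ if $m=2k+1$. *)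

theory Defs
  imports Complex_Main
begin

text \<open>Digit sequences in {0,...,m}^N. A sequence (eps_1, eps_2, ...) is represented as
  e :: nat => nat with e i = eps_(i+1); its value is sum_i e i * beta^-(i+1).\<close>

definition digit_seqs :: "nat \<Rightarrow> (nat \<Rightarrow> nat) set" where
  "digit_seqs m = {e. \<forall>i. e i \<le> m}"

definition beta_val :: "real \<Rightarrow> (nat \<Rightarrow> nat) \<Rightarrow> real" where
  "beta_val \<beta> e = (\<Sum>i. real (e i) / \<beta> ^ Suc i)"

definition Sigma_bm :: "real \<Rightarrow> nat \<Rightarrow> real \<Rightarrow> (nat \<Rightarrow> nat) set" where
  "Sigma_bm \<beta> m x = {e \<in> digit_seqs m. beta_val \<beta> e = x}"

definition W_bm :: "real \<Rightarrow> nat \<Rightarrow> real set" where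
  "W_bm \<beta> m = {x. (real m + 1 - \<beta>) / (\<beta> - 1) < x \<and> x < 1 \<and> card (Sigma_bm \<beta> m x) = 1}"

definition S_bm :: "real \<Rightarrow> nat \<Rightarrow> (nat \<Rightarrow> nat) set" where
  "S_bm \<beta> m = {e \<in> digit_seqs m. beta_val \<beta> e \<in> W_bm \<beta> m}"

definition G_m :: "nat \<Rightarrow> real" where
  "G_m m = (if even m then real (m div 2) + 1
            else (let k = real (m div 2) in (k + 1 + sqrt (k^2 + 6*k + 5)) / 2))"

definition beta_f :: "nat \<Rightarrow> real" where
  "beta_f m = (if even m then (let k = real (m div 2) in (k + 1 + sqrt (k^2 + 6*k + 1)) / 2)
               else (let k = real (m div 2) in
                      Max {x::real. x^3 - (k + 2) * x^2 + x - (k + 1) = 0}))"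

end

theory Submission
  imports Defs
begin

text \<open>
  A digit sequence has a unique value iff all its tails lie in the open interval
  \<open>((m+1-\<beta>)/(\<beta>-1), 1)\<close>. In centred coordinates \<open>Y\<^sub>i = tail\<^sub>i - m/(2(\<beta>-1))\<close> the tails obey
  \<open>Y\<^sub>i\<^sub>+\<^sub>1 = \<beta> Y\<^sub>i + (m/2 - e\<^sub>i)\<close>, and the condition reads \<open>|Y\<^sub>i| < R\<close> with \<open>R = 1 - m/(2(\<beta>-1))\<close>;
  conversely every solution of the recursion bounded strictly inside \<open>R\<close> comes from an element
  of \<open>S_bm\<close>. Consequently \<open>|m/2 - e\<^sub>i| < (\<beta>+1) R\<close>.

  For \<open>m = 2k\<close> and \<open>(\<beta>+1) R \<le> 1\<close> only the constant sequence \<open>k\<close> survives; for \<open>(\<beta>+1) R > 1\<close>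
  any number of digits \<open>k\<close> can be followed by the 2-periodic tail \<open>k+1, k-1\<close>.
  For \<open>m = 2k+1\<close> the digits are \<open>k\<close> or \<open>k+1\<close> according to the sign of \<open>Y\<^sub>i\<close>, and
  \<open>2R(\<beta>\<^sup>2+1) \<le> \<beta>+1\<close> forces the signs to alternate, leaving the two alternating sequences;
  beyond this threshold the 4-periodic tail \<open>k+1, k+1, k, k\<close> can follow alternating prefixes of
  any length. Through the quadratic and cubic equations defining them, the thresholds on \<open>R\<close>
  become \<open>\<beta> \<le> beta_f m\<close> and \<open>\<beta> > G_m m\<close>.
\<close>

section \<open>Tails of digit sequences\<close>

lemma digit_seqs_shift: "e \<in> digit_seqs m \<Longrightarrow> (\<lambda>t. e (i + t)) \<in> digit_seqs m"
  by (simp add: digit_seqs_def)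

lemma beta_val_summand_le:
  assumes "1 < \<beta>" "e \<in> digit_seqs m"
  shows "real (e i) / \<beta> ^ Suc i \<le> real m / \<beta> * (1 / \<beta>) ^ i"
proof -
  have "e i \<le> m" using assms(2) by (simp add: digit_seqs_def)
  then show ?thesis using assms(1) by (simp add: power_one_over divide_right_mono)
qed

lemma beta_val_summable:
  assumes "1 < \<beta>" "e \<in> digit_seqs m"
  shows "summable (\<lambda>i. real (e i) / \<beta> ^ Suc i)"
proof (rule summable_comparison_test')
  show "summable (\<lambda>i. real m / \<beta> * (1 / \<beta>) ^ i)"
    using assms(1) by (intro summable_mult summable_geometric) auto
  show "norm (real (e i) / \<beta> ^ Suc i) \<le> real m / \<beta> * (1 / \<beta>) ^ i" for i
    using beta_val_summand_le[OF assms, of i] assms(1) by simp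
qed

lemma beta_val_bounds:
  assumes "1 < \<beta>" "e \<in> digit_seqs m"
  shows "0 \<le> beta_val \<beta> e" "beta_val \<beta> e \<le> real m / (\<beta> - 1)"
proof -
  show "0 \<le> beta_val \<beta> e"
    unfolding beta_val_def using assms(1) beta_val_summable[OF assms] by (intro suminf_nonneg) auto
  have geom: "(\<lambda>i. real m / \<beta> * (1 / \<beta>) ^ i) sums (real m / \<beta> * (1 / (1 - 1 / \<beta>)))"
    using assms(1) by (intro sums_mult geometric_sums) auto
  have "beta_val \<beta> e \<le> real m / \<beta> * (1 / (1 - 1 / \<beta>))"
    unfolding beta_val_def
    by (rule sums_le[OF _ summable_sums[OF beta_val_summable[OF assms]] geom])
      (rule beta_val_summand_le[OF assms])
  also have "real m / \<beta> * (1 / (1 - 1 / \<beta>)) = real m / (\<beta> - 1)"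
    using assms(1) by (simp add: divide_simps)
  finally show "beta_val \<beta> e \<le> real m / (\<beta> - 1)" .
qed

definition tail_val :: "real \<Rightarrow> (nat \<Rightarrow> nat) \<Rightarrow> nat \<Rightarrow> real" where
  "tail_val \<beta> e i = beta_val \<beta> (\<lambda>t. e (i + t))"

lemma tail_val_0 [simp]: "tail_val \<beta> e 0 = beta_val \<beta> e"
  by (simp add: tail_val_def)

lemma tail_val_bounds:
  assumes "1 < \<beta>" "e \<in> digit_seqs m"
  shows "0 \<le> tail_val \<beta> e i" "tail_val \<beta> e i \<le> real m / (\<beta> - 1)"
  using beta_val_bounds[OF assms(1) digit_seqs_shift[OF assms(2)]] by (simp_all add: tail_val_def)

lemma beta_val_split:
  assumes "1 < \<beta>" "e \<in> digit_seqs m"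
  shows "beta_val \<beta> e = (\<Sum>t<i. real (e t) / \<beta> ^ Suc t) + tail_val \<beta> e i / \<beta> ^ i"
proof -
  have "summable (\<lambda>t. real (e (i + t)) / \<beta> ^ Suc t)"
    using beta_val_summable[OF assms(1) digit_seqs_shift[OF assms(2)]] .
  then have "(\<Sum>t. real (e (i + t)) / \<beta> ^ Suc t / \<beta> ^ i) = tail_val \<beta> e i / \<beta> ^ i"
    unfolding tail_val_def beta_val_def by (rule suminf_divide)
  moreover have "(\<lambda>t. real (e (i + t)) / \<beta> ^ Suc t / \<beta> ^ i)
      = (\<lambda>t. real (e (t + i)) / \<beta> ^ Suc (t + i))"
    by (simp add: add.commute power_add mult_ac)
  ultimately have tail: "(\<Sum>t. real (e (t + i)) / \<beta> ^ Suc (t + i)) = tail_val \<beta> e i / \<beta> ^ i"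
    by simp
  have "beta_val \<beta> e
      = (\<Sum>t. real (e (t + i)) / \<beta> ^ Suc (t + i)) + (\<Sum>t<i. real (e t) / \<beta> ^ Suc t)"
    unfolding beta_val_def by (rule suminf_split_initial_segment[OF beta_val_summable[OF assms]])
  then show ?thesis using tail by linarith
qed

lemma tail_val_shift: "tail_val \<beta> (\<lambda>t. e (i + t)) j = tail_val \<beta> e (i + j)"
  by (simp add: tail_val_def add.assoc)

lemma tail_val_rec:
  assumes "1 < \<beta>" "e \<in> digit_seqs m"
  shows "tail_val \<beta> e i = (real (e i) + tail_val \<beta> e (Suc i)) / \<beta>"
proof -
  have "beta_val \<beta> (\<lambda>t. e (i + t))
      = (\<Sum>t<1. real (e (i + t)) / \<beta> ^ Suc t) + tail_val \<beta> (\<lambda>t. e (i + t)) 1 / \<beta> ^ 1"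
    by (rule beta_val_split[OF assms(1) digit_seqs_shift[OF assms(2)]])
  also have "\<dots> = real (e i) / \<beta> + tail_val \<beta> e (Suc i) / \<beta>"
    by (simp add: tail_val_shift)
  finally show ?thesis by (simp add: tail_val_def add_divide_distrib)
qed

lemma tail_val_eq_bounded_solution:
  assumes b: "1 < \<beta>" and e: "e \<in> digit_seqs m"
    and bounded: "\<And>i. \<bar>c i\<bar> \<le> B"
    and rec: "\<And>i. c i = (real (e i) + c (Suc i)) / \<beta>"
  shows "tail_val \<beta> e i = c i"
proof (rule ccontr)
  define d where "d j = tail_val \<beta> e j - c j" for j
  assume "tail_val \<beta> e i \<noteq> c i"
  then have d_pos: "0 < \<bar>d i\<bar>" by (simp add: d_def)
  have d_Suc: "d (Suc j) = \<beta> * d j" for j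
    using tail_val_rec[OF b e, of j] rec[of j] b by (simp add: d_def field_simps)
  have d_pow: "d (i + n) = \<beta> ^ n * d i" for n
    by (induction n) (simp_all add: d_Suc)
  have d_bounded: "\<bar>d j\<bar> \<le> real m / (\<beta> - 1) + B" for j
    using tail_val_bounds[OF b e, of j] bounded[of j] by (simp add: d_def abs_le_iff)
  obtain n where "(real m / (\<beta> - 1) + B) / \<bar>d i\<bar> < \<beta> ^ n"
    using real_arch_pow[OF b] by blast
  then have "real m / (\<beta> - 1) + B < \<bar>d (i + n)\<bar>"
    using d_pos b by (simp add: d_pow abs_mult field_simps)
  with d_bounded show False by (meson not_le)
qed

lemma beta_expansion_exists:
  assumes b: "1 < \<beta>" and bm: "\<beta> \<le> real m + 1"
    and "0 \<le> x" "x \<le> real m / (\<beta> - 1)"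
  shows "\<exists>g \<in> digit_seqs m. beta_val \<beta> g = x"
proof -
  define M where "M = real m / (\<beta> - 1)"
  have M1: "1 \<le> M" and bM: "\<beta> * M - real m = M"
    using b bm by (simp_all add: M_def field_simps)
  define greedy where "greedy y = min m (nat \<lfloor>\<beta> * y\<rfloor>)" for y
  define r where "r = rec_nat x (\<lambda>_ y. \<beta> * y - real (greedy y))"
  have r_Suc: "r (Suc n) = \<beta> * r n - real (greedy (r n))" for n
    by (simp add: r_def)
  have greedy_step: "0 \<le> \<beta> * y - real (greedy y) \<and> \<beta> * y - real (greedy y) \<le> M"
    if "0 \<le> y" "y \<le> M" for y
  proof (cases "nat \<lfloor>\<beta> * y\<rfloor> \<le> m")
    case True
    then have "real (greedy y) = of_int \<lfloor>\<beta> * y\<rfloor>"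
      using that b by (simp add: greedy_def)
    then show ?thesis using M1 by linarith
  next
    case False
    then have "greedy y = m" "real m + 1 \<le> \<beta> * y" by (simp_all add: greedy_def) linarith
    moreover have "\<beta> * y \<le> \<beta> * M" using that b by simp
    ultimately show ?thesis using bM by linarith
  qed
  have r_bounds: "0 \<le> r n \<and> r n \<le> M" for n
  proof (induction n)
    case 0
    then show ?case using assms by (simp add: r_def M_def)
  next
    case (Suc n)
    then show ?case using greedy_step[of "r n"] by (simp add: r_Suc)
  qed
  define g where "g n = greedy (r n)" for n
  have g: "g \<in> digit_seqs m" by (simp add: digit_seqs_def g_def greedy_def)
  have "tail_val \<beta> g 0 = r 0"
  proof (rule tail_val_eq_bounded_solution[OF b g])
    show "\<bar>r i\<bar> \<le> M" for i using r_bounds[of i] by simp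
    show "r i = (real (g i) + r (Suc i)) / \<beta>" for i
      using r_Suc[of i] b by (simp add: g_def field_simps)
  qed
  then show ?thesis using g by (auto simp: r_def)
qed

lemma beta_val_eq_if_prefix_tail_eq:
  assumes b: "1 < \<beta>" and e: "e \<in> digit_seqs m" and e': "e' \<in> digit_seqs m"
    and prefix: "\<And>t. t < i \<Longrightarrow> e' t = e t"
  shows "beta_val \<beta> e' = beta_val \<beta> e \<longleftrightarrow> tail_val \<beta> e' i = tail_val \<beta> e i"
proof -
  have "(\<Sum>t<i. real (e' t) / \<beta> ^ Suc t) = (\<Sum>t<i. real (e t) / \<beta> ^ Suc t)"
    using prefix by (intro sum.cong) auto
  then show ?thesis
    using beta_val_split[OF b e, of i] beta_val_split[OF b e', of i] b by auto
qed

section \<open>Unique expansions\<close>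

lemma exists_expansion_with_digit:
  assumes b: "1 < \<beta>" and bm: "\<beta> \<le> real m + 1" and e: "e \<in> digit_seqs m" and "d \<le> m"
    and "0 \<le> real (e i) + tail_val \<beta> e (Suc i) - real d"
    and "real (e i) + tail_val \<beta> e (Suc i) - real d \<le> real m / (\<beta> - 1)"
  shows "\<exists>e' \<in> Sigma_bm \<beta> m (beta_val \<beta> e). e' i = d"
proof -
  obtain g where g: "g \<in> digit_seqs m" "beta_val \<beta> g = real (e i) + tail_val \<beta> e (Suc i) - real d"
    using beta_expansion_exists[OF b bm] assms(5,6) by blast
  define e' where "e' j = (if j < i then e j else if j = i then d else g (j - Suc i))" for j
  have e': "e' \<in> digit_seqs m"
    using e g(1) \<open>d \<le> m\<close> by (simp add: digit_seqs_def e'_def)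
  have "(\<lambda>t. e' (Suc i + t)) = g" by (simp add: e'_def)
  then have "tail_val \<beta> e' (Suc i) = beta_val \<beta> g" by (simp add: tail_val_def)
  then have "tail_val \<beta> e' i = tail_val \<beta> e i"
    using tail_val_rec[OF b e', of i] tail_val_rec[OF b e, of i] g(2) by (simp add: e'_def)
  then have "beta_val \<beta> e' = beta_val \<beta> e"
    using beta_val_eq_if_prefix_tail_eq[OF b e e', of i] by (simp add: e'_def)
  then show ?thesis using e' by (auto simp: Sigma_bm_def e'_def)
qed

text \<open>A tail outside the interval would allow changing the current digit by \<open>\<plusminus>1\<close> and
  re-expanding the remainder, giving a second expansion of the same value.\<close>

lemma tail_val_Suc_in_interval_if_unique:
  assumes b: "1 < \<beta>" and bm: "\<beta> \<le> real m + 1"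
    and unique: "Sigma_bm \<beta> m (beta_val \<beta> e) = {e}"
    and lower: "(real m + 1 - \<beta>) / (\<beta> - 1) < tail_val \<beta> e i" and upper: "tail_val \<beta> e i < 1"
  shows "(real m + 1 - \<beta>) / (\<beta> - 1) < tail_val \<beta> e (Suc i) \<and> tail_val \<beta> e (Suc i) < 1"
proof -
  define L where "L = (real m + 1 - \<beta>) / (\<beta> - 1)"
  define t where "t = tail_val \<beta> e i"
  define t' where "t' = tail_val \<beta> e (Suc i)"
  have e: "e \<in> digit_seqs m" using unique by (auto simp: Sigma_bm_def)
  have L: "0 \<le> L" "L + 1 = real m / (\<beta> - 1)" using b bm by (simp_all add: L_def field_simps)
  have t': "0 \<le> t'" "t' \<le> L + 1" using tail_val_bounds[OF b e, of "Suc i"] L by (simp_all add: t'_def)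
  have rec: "\<beta> * t = real (e i) + t'"
    using tail_val_rec[OF b e, of i] b by (simp add: t_def t'_def field_simps)
  have only_digit: "d = e i"
    if "d \<le> m" "0 \<le> real (e i) + t' - real d" "real (e i) + t' - real d \<le> L + 1" for d
    using exists_expansion_with_digit[OF b bm e that(1)] that unique L by (auto simp: t'_def)
  have digit_le: "e i \<le> m" using e by (simp add: digit_seqs_def)
  have "t' < 1"
  proof (cases "e i = m")
    case True
    have "\<beta> * t < \<beta>" using upper b by (simp add: t_def)
    then show ?thesis using rec True bm by linarith
  next
    case False
    with digit_le have "e i + 1 \<le> m" by simp
    show ?thesis
    proof (rule ccontr)
      assume "\<not> t' < 1"
      then have "e i + 1 = e i" using only_digit[OF \<open>e i + 1 \<le> m\<close>] t' by simp
      then show False by simp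
    qed
  qed
  moreover have "L < t'"
  proof (cases "e i = 0")
    case True
    have "t < \<beta> * t" using lower L(1) b by (simp add: t_def L_def)
    then show ?thesis using rec lower True by (simp add: t_def L_def)
  next
    case False
    then have digit: "real (e i - 1) = real (e i) - 1" by simp
    show ?thesis
    proof (rule ccontr)
      assume "\<not> L < t'"
      then have "e i - 1 = e i" using only_digit[of "e i - 1"] t' digit digit_le by simp
      then show False using False by simp
    qed
  qed
  ultimately show ?thesis by (simp add: L_def t'_def)
qed

lemma Sigma_bm_singleton_if_tails_in_interval:
  assumes b: "1 < \<beta>" and e: "e \<in> digit_seqs m"
    and tails: "\<And>i. (real m + 1 - \<beta>) / (\<beta> - 1) < tail_val \<beta> e i \<and> tail_val \<beta> e i < 1"
  shows "Sigma_bm \<beta> m (beta_val \<beta> e) = {e}"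
proof -
  have "e' = e" if e': "e' \<in> digit_seqs m" and val: "beta_val \<beta> e' = beta_val \<beta> e" for e'
  proof (rule ccontr)
    assume "e' \<noteq> e"
    then have "\<exists>j. e' j \<noteq> e j" by auto
    define n where "n = (LEAST j. e' j \<noteq> e j)"
    have differ: "e' n \<noteq> e n"
      unfolding n_def by (rule LeastI_ex) fact
    have "e' t = e t" if "t < n" for t
      using not_less_Least[of t "\<lambda>j. e' j \<noteq> e j"] that by (simp add: n_def)
    then have "tail_val \<beta> e' n = tail_val \<beta> e n"
      using beta_val_eq_if_prefix_tail_eq[OF b e e'] val by blast
    then have "(real (e' n) + tail_val \<beta> e' (Suc n)) / \<beta>
        = (real (e n) + tail_val \<beta> e (Suc n)) / \<beta>"
      using tail_val_rec[OF b e, of n] tail_val_rec[OF b e', of n] by metis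
    then have eq: "real (e' n) + tail_val \<beta> e' (Suc n) = real (e n) + tail_val \<beta> e (Suc n)"
      using b by simp
    define L where "L = (real m + 1 - \<beta>) / (\<beta> - 1)"
    have "real m / (\<beta> - 1) = L + 1"
      using b by (simp add: L_def field_simps)
    then have "\<bar>tail_val \<beta> e' (Suc n) - tail_val \<beta> e (Suc n)\<bar> < 1"
      using tail_val_bounds[OF b e', of "Suc n"] tails[of "Suc n"] by (simp add: L_def abs_less_iff)
    moreover have "1 \<le> \<bar>real (e' n) - real (e n)\<bar>"
      using differ by linarith
    ultimately show False using eq by linarith
  qed
  then show ?thesis using e by (auto simp: Sigma_bm_def)
qed

lemma card_eq_1_iff_eq_singleton:
  assumes "x \<in> A"
  shows "card A = 1 \<longleftrightarrow> A = {x}"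
proof
  assume "card A = 1"
  then obtain y where "A = {y}" by (rule card_1_singletonE)
  with assms show "A = {x}" by simp
qed simp

lemma S_bm_iff_tails_in_interval:
  assumes "1 < \<beta>" "\<beta> \<le> real m + 1"
  shows "e \<in> S_bm \<beta> m \<longleftrightarrow> e \<in> digit_seqs m \<and>
    (\<forall>i. (real m + 1 - \<beta>) / (\<beta> - 1) < tail_val \<beta> e i \<and> tail_val \<beta> e i < 1)"
    (is "_ \<longleftrightarrow> _ \<and> (\<forall>i. ?J (tail_val \<beta> e i))")
proof -
  have "e \<in> S_bm \<beta> m \<longleftrightarrow>
      e \<in> digit_seqs m \<and> ?J (beta_val \<beta> e) \<and> Sigma_bm \<beta> m (beta_val \<beta> e) = {e}"
  proof -
    have "card (Sigma_bm \<beta> m (beta_val \<beta> e)) = 1 \<longleftrightarrow> Sigma_bm \<beta> m (beta_val \<beta> e) = {e}"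
      if "e \<in> digit_seqs m"
      using that by (intro card_eq_1_iff_eq_singleton) (simp add: Sigma_bm_def)
    then show ?thesis
      unfolding S_bm_def W_bm_def mem_Collect_eq by blast
  qed
  moreover have "?J (tail_val \<beta> e i)"
    if "Sigma_bm \<beta> m (beta_val \<beta> e) = {e}" "?J (beta_val \<beta> e)" for i
    by (induction i) (use that tail_val_Suc_in_interval_if_unique[OF assms] in auto)
  moreover have "Sigma_bm \<beta> m (beta_val \<beta> e) = {e}"
    if "e \<in> digit_seqs m" "\<forall>i. ?J (tail_val \<beta> e i)"
    using Sigma_bm_singleton_if_tails_in_interval[OF assms(1)] that by blast
  ultimately show ?thesis by (metis tail_val_0)
qed

section \<open>Centred tails\<close>

text \<open>The interval \<open>((m+1-\<beta>)/(\<beta>-1), 1)\<close> in the definition of \<open>W_bm\<close> has centre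
  \<open>expansion_centre \<beta> m\<close> and radius \<open>unique_radius \<beta> m\<close>.\<close>

definition expansion_centre :: "real \<Rightarrow> nat \<Rightarrow> real" where
  "expansion_centre \<beta> m = real m / (2 * (\<beta> - 1))"

definition unique_radius :: "real \<Rightarrow> nat \<Rightarrow> real" where
  "unique_radius \<beta> m = 1 - expansion_centre \<beta> m"

lemma S_bm_iff_centred:
  assumes b: "1 < \<beta>" and bm: "\<beta> \<le> real m + 1"
  shows "e \<in> S_bm \<beta> m \<longleftrightarrow> e \<in> digit_seqs m \<and>
    (\<forall>i. \<bar>tail_val \<beta> e i - expansion_centre \<beta> m\<bar> < unique_radius \<beta> m)"
proof -
  have "(real m + 1 - \<beta>) / (\<beta> - 1) = 2 * expansion_centre \<beta> m - 1"
    using b by (simp add: expansion_centre_def field_simps)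
  then have "(real m + 1 - \<beta>) / (\<beta> - 1) < t \<and> t < 1 \<longleftrightarrow>
      \<bar>t - expansion_centre \<beta> m\<bar> < unique_radius \<beta> m" for t
    by (simp add: unique_radius_def abs_less_iff) linarith
  then show ?thesis using S_bm_iff_tails_in_interval[OF b bm] by simp
qed

lemma tail_val_centred_rec:
  assumes b: "1 < \<beta>" and e: "e \<in> digit_seqs m"
  shows "tail_val \<beta> e (Suc i) - expansion_centre \<beta> m =
    \<beta> * (tail_val \<beta> e i - expansion_centre \<beta> m) + (real m / 2 - real (e i))"
proof -
  have "\<beta> * expansion_centre \<beta> m = expansion_centre \<beta> m + real m / 2"
    using b by (simp add: expansion_centre_def field_simps)
  moreover have "\<beta> * tail_val \<beta> e i = real (e i) + tail_val \<beta> e (Suc i)"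
    using tail_val_rec[OF b e, of i] b by (simp add: field_simps)
  ultimately show ?thesis by (simp add: algebra_simps)
qed

lemma S_bm_memI:
  assumes b: "1 < \<beta>" and bm: "\<beta> \<le> real m + 1" and e: "e \<in> digit_seqs m"
    and bounded: "\<And>i. \<bar>y i\<bar> \<le> B" and "B < unique_radius \<beta> m"
    and rec: "\<And>i. \<beta> * y i + (real m / 2 - real (e i)) = y (Suc i)"
  shows "e \<in> S_bm \<beta> m"
proof -
  have centre: "\<beta> * expansion_centre \<beta> m = expansion_centre \<beta> m + real m / 2"
    using b by (simp add: expansion_centre_def field_simps)
  have "tail_val \<beta> e i = expansion_centre \<beta> m + y i" for i
  proof (rule tail_val_eq_bounded_solution[OF b e])
    show "\<bar>expansion_centre \<beta> m + y i\<bar> \<le> \<bar>expansion_centre \<beta> m\<bar> + B" for i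
      using bounded[of i] by (simp add: abs_triangle_ineq order_trans)
    show "expansion_centre \<beta> m + y i
        = (real (e i) + (expansion_centre \<beta> m + y (Suc i))) / \<beta>" for i
      using rec[of i] centre b by (simp add: field_simps)
  qed
  then show ?thesis
    using S_bm_iff_centred[OF b bm] e bounded \<open>B < unique_radius \<beta> m\<close>
    by (metis add_diff_cancel_left' order_le_less_trans)
qed

lemma S_bm_digit_bound:
  assumes b: "1 < \<beta>" and bm: "\<beta> \<le> real m + 1" and eS: "e \<in> S_bm \<beta> m"
  shows "\<bar>real m / 2 - real (e i)\<bar> < (\<beta> + 1) * unique_radius \<beta> m"
proof -
  define Y where "Y j = tail_val \<beta> e j - expansion_centre \<beta> m" for j
  have e: "e \<in> digit_seqs m" and Y: "\<And>j. \<bar>Y j\<bar> < unique_radius \<beta> m"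
    using eS S_bm_iff_centred[OF b bm] by (auto simp: Y_def)
  have "real m / 2 - real (e i) = Y (Suc i) - \<beta> * Y i"
    using tail_val_centred_rec[OF b e, of i] by (simp add: Y_def)
  also have "\<bar>\<dots>\<bar> \<le> \<bar>Y (Suc i)\<bar> + \<beta> * \<bar>Y i\<bar>"
    using b abs_triangle_ineq4[of "Y (Suc i)" "\<beta> * Y i"] by (simp add: abs_mult)
  also have "\<dots> < unique_radius \<beta> m + \<beta> * unique_radius \<beta> m"
    using Y[of i] Y[of "Suc i"] b by (intro add_strict_mono mult_strict_left_mono) auto
  finally show ?thesis by (simp add: algebra_simps)
qed

lemma S_bm_splice:
  assumes b: "1 < \<beta>" and bm: "\<beta> \<le> real m + 1"
    and c: "c \<in> digit_seqs m" and d: "d \<in> digit_seqs m"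
    and z_rec: "\<And>i. \<beta> * z i + (real m / 2 - real (c i)) = z (Suc i)"
    and w_rec: "\<And>i. \<beta> * w i + (real m / 2 - real (d i)) = w (Suc i)"
    and z_bound: "\<And>i. \<bar>z i\<bar> + \<bar>w 0 - z n\<bar> \<le> B" and w_bound: "\<And>i. \<bar>w i\<bar> \<le> B"
    and "B < unique_radius \<beta> m"
  shows "(\<lambda>i. if i < n then c i else d (i - n)) \<in> S_bm \<beta> m"
proof (rule S_bm_memI[OF b bm _ _ \<open>B < unique_radius \<beta> m\<close>])
  \<comment> \<open>the correction term solves the homogeneous recursion and matches \<open>z\<close> to \<open>w\<close> at \<open>n\<close>\<close>
  define y where "y i = (if i < n then z i + (w 0 - z n) / \<beta> ^ (n - i) else w (i - n))" for i
  show "(\<lambda>i. if i < n then c i else d (i - n)) \<in> digit_seqs m"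
    using c d by (simp add: digit_seqs_def)
  show "\<bar>y i\<bar> \<le> B" for i
  proof (cases "i < n")
    case True
    have "\<bar>(w 0 - z n) / \<beta> ^ (n - i)\<bar> \<le> \<bar>w 0 - z n\<bar>"
      using b by (simp add: abs_div divide_le_eq mult_le_cancel_left1)
    then show ?thesis
      using True z_bound[of i] abs_triangle_ineq[of "z i" "(w 0 - z n) / \<beta> ^ (n - i)"]
      by (simp add: y_def)
  qed (simp add: y_def w_bound)
  show "\<beta> * y i + (real m / 2 - real (if i < n then c i else d (i - n))) = y (Suc i)" for i
  proof -
    consider "Suc i < n" | "Suc i = n" | "n \<le> i" by linarith
    then show ?thesis
    proof cases
      case 1
      then have "n - i = Suc (n - Suc i)" by simp
      then have "\<beta> * ((w 0 - z n) / \<beta> ^ (n - i)) = (w 0 - z n) / \<beta> ^ (n - Suc i)"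
        using b by simp
      then show ?thesis using 1 z_rec[of i] by (simp add: y_def algebra_simps)
    next
      case 2
      then have "i < n" "n - i = 1" by simp_all
      then have "\<beta> * y i = \<beta> * z i + (w 0 - z n)" using b by (simp add: y_def field_simps)
      then show ?thesis using 2 z_rec[of i] by (simp add: y_def)
    next
      case 3
      then show ?thesis using w_rec[of "i - n"] by (simp add: y_def Suc_diff_le)
    qed
  qed
qed

section \<open>Classification by the radius\<close>

lemma unique_radius_eq:
  assumes "1 < \<beta>"
  shows "(\<beta> - 1) * (2 * unique_radius \<beta> m) = 2 * \<beta> - 2 - real m"
  using assms by (simp add: unique_radius_def expansion_centre_def field_simps)

lemma unique_radius_le_half_iff:
  assumes "1 < \<beta>"
  shows "unique_radius \<beta> m \<le> 1 / 2 \<longleftrightarrow> \<beta> \<le> real m + 1"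
proof -
  have "unique_radius \<beta> m \<le> 1 / 2 \<longleftrightarrow> (\<beta> - 1) * (2 * unique_radius \<beta> m) \<le> (\<beta> - 1) * 1"
    using assms by (subst mult_le_cancel_left_pos) auto
  also have "\<dots> \<longleftrightarrow> \<beta> \<le> real m + 1"
    unfolding unique_radius_eq[OF assms] by (auto simp: diff_le_eq)
  finally show ?thesis .
qed

lemma S_bm_eq_constant:
  assumes m: "m = 2 * k" and b: "1 < \<beta>"
    and pos: "0 < unique_radius \<beta> m" and small: "(\<beta> + 1) * unique_radius \<beta> m \<le> 1"
  shows "S_bm \<beta> m = {\<lambda>_. k}"
proof -
  have "2 * unique_radius \<beta> m \<le> (\<beta> + 1) * unique_radius \<beta> m"
    using pos b by (intro mult_right_mono) auto
  then have "unique_radius \<beta> m \<le> 1 / 2" using small by simp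
  then have bm: "\<beta> \<le> real m + 1" using unique_radius_le_half_iff[OF b] by simp
  have "(\<lambda>_. k) \<in> S_bm \<beta> m"
    by (rule S_bm_memI[OF b bm, where y = "\<lambda>_. 0" and B = 0])
      (use m pos in \<open>simp_all add: digit_seqs_def\<close>)
  moreover have "e = (\<lambda>_. k)" if "e \<in> S_bm \<beta> m" for e
  proof
    fix i
    have "\<bar>real k - real (e i)\<bar> < 1"
      using S_bm_digit_bound[OF b bm that, of i] small m by simp
    then show "e i = k" by linarith
  qed
  ultimately show ?thesis by blast
qed

lemma infinite_S_bm_even:
  assumes m: "m = 2 * k" and k: "1 \<le> k" and b: "1 < \<beta>" and bm: "\<beta> \<le> real m + 1"
    and large: "1 < (\<beta> + 1) * unique_radius \<beta> m"
  shows "infinite (S_bm \<beta> m)"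
proof -
  define q where "q = 1 / (\<beta> + 1)"
  have q: "0 < q" "q < unique_radius \<beta> m" "\<beta> * q = 1 - q"
    using b large by (simp_all add: q_def field_simps)
  define d where "d i = (if even i then k + 1 else k - 1)" for i :: nat
  define w where "w i = (if even i then q else - q)" for i :: nat
  define F where "F n i = (if i < n then k else d (i - n))" for n i :: nat
  have "F n \<in> S_bm \<beta> m" for n
    unfolding F_def
  proof (rule S_bm_splice[OF b bm, where z = "\<lambda>_. 0" and w = w and B = q])
    show "(\<lambda>_. k) \<in> digit_seqs m" "d \<in> digit_seqs m"
      using m k by (auto simp: digit_seqs_def d_def)
    show "\<beta> * w i + (real m / 2 - real (d i)) = w (Suc i)" for i
      using m k q by (auto simp: w_def d_def)
  qed (use m q in \<open>simp_all add: w_def\<close>)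
  moreover have "inj F"
  proof (rule injI)
    have "F n n \<noteq> F n' n" if "n < n'" for n n'
      using that by (simp add: F_def d_def)
    then show "n = n'" if "F n = F n'" for n n'
      using that by (metis linorder_neqE_nat)
  qed
  ultimately show ?thesis
    using inj_on_finite[of F UNIV "S_bm \<beta> m"] by auto
qed

text \<open>Two equal signs in a row would push \<open>|Y|\<close> beyond \<open>H\<close> one step later.\<close>

lemma sgn_alternates:
  fixes Y :: "nat \<Rightarrow> real"
  assumes b: "0 < \<beta>" and bound: "\<And>i. \<bar>Y i\<bar> < H" and nz: "\<And>i. Y i \<noteq> 0"
    and rec: "\<And>i. Y (Suc i) = \<beta> * Y i - sgn (Y i) / 2"
    and upper: "2 * (\<beta>\<^sup>2 + 1) * H \<le> \<beta> + 1"
  shows "sgn (Y i) = (-1) ^ i * sgn (Y 0)"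
proof -
  have "sgn (Y (Suc i)) = - sgn (Y i)" for i
  proof (rule ccontr)
    assume "sgn (Y (Suc i)) \<noteq> - sgn (Y i)"
    then have same: "sgn (Y (Suc i)) = sgn (Y i)"
      using nz[of i] nz[of "Suc i"] by (auto simp: sgn_if split: if_splits)
    define \<sigma> where "\<sigma> = sgn (Y i)"
    have \<sigma>: "\<sigma> * \<sigma> = 1" "\<bar>\<sigma>\<bar> = 1" using nz[of i] by (simp_all add: \<sigma>_def)
    have abs_Y: "\<sigma> * Y i = \<bar>Y i\<bar>" "\<sigma> * Y (Suc i) = \<bar>Y (Suc i)\<bar>"
      using same by (simp_all add: \<sigma>_def abs_sgn mult.commute)
    have "\<sigma> * Y (Suc j) = \<beta> * (\<sigma> * Y j) - \<sigma> * sgn (Y j) / 2" for j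
      unfolding rec[of j] by (simp add: algebra_simps)
    then have "\<sigma> * Y (Suc (Suc i)) = \<beta> * (\<beta> * \<bar>Y i\<bar> - 1 / 2) - 1 / 2"
      using abs_Y same \<sigma>(1) by (simp add: \<sigma>_def)
    also have "\<dots> < \<beta> * (\<beta> * H - 1 / 2) - 1 / 2"
      using bound[of i] b by simp
    also have "\<dots> \<le> - H"
      using upper by (simp add: power2_eq_square algebra_simps)
    moreover have "\<bar>\<sigma> * Y (Suc (Suc i))\<bar> = \<bar>Y (Suc (Suc i))\<bar>"
      by (simp add: abs_mult \<sigma>(2))
    ultimately have "\<bar>Y (Suc (Suc i))\<bar> > H"
      using abs_ge_minus_self[of "\<sigma> * Y (Suc (Suc i))"] by linarith
    then show False using bound[of "Suc (Suc i)"] by simp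
  qed
  then show ?thesis by (induction i) simp_all
qed

lemma alternating_digits_centred_rec:
  assumes m: "m = 2 * k + 1" and b: "0 < \<beta>"
  shows "\<beta> * ((-1) ^ i / (2 * (\<beta> + 1))) + (real m / 2 - real (if even i then k + 1 else k))
    = (-1) ^ Suc i / (2 * (\<beta> + 1))"
  using b by (cases "even i") (simp_all add: m field_simps)

lemma mem_S_bm_odd_cases:
  assumes m: "m = 2 * k + 1" and b: "1 < \<beta>" and bm: "\<beta> \<le> real m + 1"
    and close: "(\<beta> + 1) * unique_radius \<beta> m \<le> 1"
    and upper: "2 * (\<beta>\<^sup>2 + 1) * unique_radius \<beta> m \<le> \<beta> + 1"
    and eS: "e \<in> S_bm \<beta> m"
  shows "e = (\<lambda>i. if even i then k + 1 else k) \<or> e = (\<lambda>i. if even i then k else k + 1)"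
proof -
  define H where "H = unique_radius \<beta> m"
  have half: "H \<le> 1 / 2" using unique_radius_le_half_iff[OF b] bm by (simp add: H_def)
  define Y where "Y i = tail_val \<beta> e i - expansion_centre \<beta> m" for i
  have e: "e \<in> digit_seqs m" and Y_bound: "\<And>i. \<bar>Y i\<bar> < H"
    using eS S_bm_iff_centred[OF b bm] by (auto simp: Y_def H_def)
  have m2: "real m / 2 = real k + 1 / 2" using m by simp
  have Y_rec: "Y (Suc i) = \<beta> * Y i + (real k + 1 / 2 - real (e i))" for i
    using tail_val_centred_rec[OF b e, of i] m2 by (simp add: Y_def)
  have digit_close: "\<bar>real k + 1 / 2 - real (e i)\<bar> < 1" for i
    using S_bm_digit_bound[OF b bm eS, of i] close m2 by simp
  have "real (e i) < real (k + 2)" "real k < real (e i + 1)" for i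
    using digit_close[of i] by (auto simp: abs_less_iff)
  then have "e i < k + 2" "k < e i + 1" for i
    by (simp_all only: of_nat_less_iff)
  then have digit: "e i = k \<or> e i = k + 1" for i
    by (metis add_2_eq_Suc' less_Suc_eq less_antisym Suc_eq_plus1 not_less_eq)
  have pos: "0 < Y i" if "e i = k + 1" for i
  proof (rule ccontr)
    assume "\<not> 0 < Y i"
    then have "\<beta> * Y i \<le> 0" using b by (simp add: mult_nonneg_nonpos)
    then show False using Y_rec[of i] Y_bound[of "Suc i"] half that by (simp add: abs_less_iff)
  qed
  have neg: "Y i < 0" if "e i = k" for i
  proof (rule ccontr)
    assume "\<not> Y i < 0"
    then have "0 \<le> \<beta> * Y i" using b by simp
    then show False using Y_rec[of i] Y_bound[of "Suc i"] half that by (simp add: abs_less_iff)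
  qed
  have nz: "Y i \<noteq> 0" and e_sign: "e i = (if 0 < Y i then k + 1 else k)" for i
    using digit[of i] pos[of i] neg[of i] by auto
  have alt: "sgn (Y i) = (-1) ^ i * sgn (Y 0)" for i
  proof (rule sgn_alternates[OF _ Y_bound nz])
    show "Y (Suc i) = \<beta> * Y i - sgn (Y i) / 2" for i
    proof (cases "0 < Y i")
      case True
      then show ?thesis using Y_rec[of i] e_sign[of i] by simp
    next
      case False
      then have "Y i < 0" using nz[of i] by linarith
      then show ?thesis using Y_rec[of i] e_sign[of i] by simp
    qed
  qed (use b upper in \<open>simp_all add: H_def\<close>)
  have sign_pattern: "0 < Y i \<longleftrightarrow> (even i \<longleftrightarrow> 0 < Y 0)" for i
  proof (cases "even i")
    case True
    then show ?thesis using alt[of i] sgn_1_pos[of "Y i"] sgn_1_pos[of "Y 0"] by simp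
  next
    case False
    then show ?thesis using alt[of i] nz[of 0] sgn_1_pos[of "Y i"] sgn_1_neg[of "Y 0"] by auto
  qed
  have "e i = (if even i \<longleftrightarrow> 0 < Y 0 then k + 1 else k)" for i
    using e_sign[of i] sign_pattern[of i] by simp
  then show ?thesis by (cases "0 < Y 0") (simp_all add: fun_eq_iff)
qed

lemma S_bm_eq_alternating:
  assumes m: "m = 2 * k + 1" and b: "1 < \<beta>"
    and lower: "1 < 2 * (\<beta> + 1) * unique_radius \<beta> m"
    and upper: "2 * (\<beta>\<^sup>2 + 1) * unique_radius \<beta> m \<le> \<beta> + 1"
  shows "S_bm \<beta> m = {\<lambda>i. if even i then k + 1 else k, \<lambda>i. if even i then k else k + 1}"
proof -
  define H where "H = unique_radius \<beta> m"
  define P where "P = 1 / (2 * (\<beta> + 1))"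
  have "0 < 2 * (\<beta> + 1) * H" using lower by (simp add: H_def)
  then have H_pos: "0 < H" using b by (simp add: zero_less_mult_iff)
  have P: "P < H" using lower b by (simp add: H_def P_def field_simps)
  have A_pos: "0 < \<beta>\<^sup>2 + 1" by (simp add: add_nonneg_pos)
  have "(\<beta>\<^sup>2 + 1) * (2 * H) \<le> \<beta> + 1" using upper by (simp only: H_def mult_ac)
  also have "\<dots> \<le> (\<beta>\<^sup>2 + 1) * 1" using b by (simp add: power2_eq_square)
  finally have "(\<beta>\<^sup>2 + 1) * (2 * H) \<le> (\<beta>\<^sup>2 + 1) * 1" .
  then have "H \<le> 1 / 2" using A_pos by simp
  then have bm: "\<beta> \<le> real m + 1" using unique_radius_le_half_iff[OF b] by (simp add: H_def)
  have "(2 * (\<beta>\<^sup>2 + 1)) * ((\<beta> + 1) * H) = (\<beta> + 1) * (2 * (\<beta>\<^sup>2 + 1) * H)"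
    by (simp add: mult_ac)
  also have "\<dots> \<le> (\<beta> + 1) * (\<beta> + 1)"
    using upper b by (intro mult_left_mono) (simp_all add: H_def)
  also have "\<dots> \<le> (2 * (\<beta>\<^sup>2 + 1)) * 1"
    using zero_le_power2[of "\<beta> - 1"] by (simp add: power2_eq_square algebra_simps)
  finally have close: "(\<beta> + 1) * H \<le> 1"
    by (subst (asm) mult_le_cancel_left_pos) (use A_pos in simp_all)
  define a where "a i = (if even i then k + 1 else k)" for i :: nat
  have a: "a \<in> digit_seqs m" "(\<lambda>i. a (Suc i)) \<in> digit_seqs m"
    using m by (simp_all add: a_def digit_seqs_def)
  have a_rec: "\<beta> * ((-1) ^ i / (2 * (\<beta> + 1))) + (real m / 2 - real (a i))
      = (-1) ^ Suc i / (2 * (\<beta> + 1))" for i using alternating_digits_centred_rec[OF m, of \<beta> i] b by (simp add: a_def)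
  have a_bound: "\<bar>(-1) ^ i / (2 * (\<beta> + 1))\<bar> \<le> P" for i :: nat
    using b by (simp add: P_def abs_div)
  have "a \<in> S_bm \<beta> m" "(\<lambda>i. a (Suc i)) \<in> S_bm \<beta> m"
    using S_bm_memI[OF b bm a(1) a_bound _ a_rec] S_bm_memI[OF b bm a(2) a_bound _ a_rec] P
    by (simp_all add: H_def)
  moreover have "a = (\<lambda>i. if even i then k + 1 else k)"
    and "(\<lambda>i. a (Suc i)) = (\<lambda>i. if even i then k else k + 1)"
    by (simp_all add: a_def fun_eq_iff)
  ultimately show ?thesis
    using mem_S_bm_odd_cases[OF m b bm close[unfolded H_def] upper] by auto
qed

lemma infinite_S_bm_odd:
  assumes m: "m = 2 * k + 1" and b: "1 < \<beta>" and bm: "\<beta> \<le> real m + 1"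
    and large: "\<beta> + 1 < 2 * (\<beta>\<^sup>2 + 1) * unique_radius \<beta> m"
  shows "infinite (S_bm \<beta> m)"
proof -
  have A_pos: "0 < \<beta>\<^sup>2 + 1" by (simp add: add_nonneg_pos)
  define a where "a = (\<beta> + 1) / (2 * (\<beta>\<^sup>2 + 1))"
  define a' where "a' = (\<beta> - 1) / (2 * (\<beta>\<^sup>2 + 1))"
  define P where "P = 1 / (2 * (\<beta> + 1))"
  have a: "a < unique_radius \<beta> m"
    using large A_pos by (simp add: a_def divide_less_eq mult_ac)
  have cycle: "\<beta> * a - 1 / 2 = a'" "\<beta> * a' - 1 / 2 = - a"
    using A_pos by (simp_all add: a_def a'_def field_simps power2_eq_square)
  have "2 * (\<beta>\<^sup>2 + 1) < 2 * (\<beta> + 1) * (\<beta> + 1)"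
    using b by (simp add: power2_eq_square algebra_simps)
  then have P: "0 < P" "P < a"
    using b A_pos by (simp_all add: P_def a_def field_simps power2_eq_square)
  have a': "0 \<le> a'" "a' \<le> a"
    using b A_pos by (simp_all add: a_def a'_def divide_right_mono)
  have digit_offsets: "real m / 2 - real (k + 1) = - 1 / 2" "real m / 2 - real k = 1 / 2"
    using m by (simp_all add: field_simps)
  define c where "c i = (if even i then k + 1 else k)" for i :: nat
  define d where "d i = (if i mod 4 < 2 then k + 1 else k)" for i :: nat
  define w where "w i = (if i mod 4 = 0 then a else if i mod 4 = 1 then a'
    else if i mod 4 = 2 then - a else - a')" for i :: nat
  define F where "F n i = (if i < 2 * n then c i else d (i - 2 * n))" for n i :: nat
  have "F n \<in> S_bm \<beta> m" for n
    unfolding F_def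
  proof (rule S_bm_splice[OF b bm, where z = "\<lambda>i. (-1) ^ i / (2 * (\<beta> + 1))" and w = w
        and B = a])
    show "c \<in> digit_seqs m" "d \<in> digit_seqs m"
      using m by (simp_all add: c_def d_def digit_seqs_def)
    show "\<beta> * ((-1) ^ i / (2 * (\<beta> + 1))) + (real m / 2 - real (c i))
        = (-1) ^ Suc i / (2 * (\<beta> + 1))" for i
      using alternating_digits_centred_rec[OF m, of \<beta> i] b by (simp add: c_def)
    show "\<beta> * w i + (real m / 2 - real (d i)) = w (Suc i)" for i
    proof -
      have "i mod 4 < 4" by simp
      then consider "i mod 4 = 0" | "i mod 4 = 1" | "i mod 4 = 2" | "i mod 4 = 3" by linarith
      then show ?thesis
      proof cases
        case 1
        then have "w i = a" "d i = k + 1" "w (Suc i) = a'" by (simp_all add: w_def d_def mod_Suc)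
        then show ?thesis using cycle digit_offsets by simp
      next
        case 2
        then have "w i = a'" "d i = k + 1" "w (Suc i) = - a" by (simp_all add: w_def d_def mod_Suc)
        then show ?thesis using cycle digit_offsets by simp
      next
        case 3
        then have "w i = - a" "d i = k" "w (Suc i) = - a'" by (simp_all add: w_def d_def mod_Suc)
        then show ?thesis using cycle digit_offsets by simp
      next
        case 4
        then have "w i = - a'" "d i = k" "w (Suc i) = a" by (simp_all add: w_def d_def mod_Suc)
        then show ?thesis using cycle digit_offsets by simp
      qed
    qed
    have "\<bar>(-1) ^ j / (2 * (\<beta> + 1))\<bar> = P" for j :: nat
      using b by (simp add: P_def abs_div)
    then show "\<bar>(-1) ^ i / (2 * (\<beta> + 1))\<bar> + \<bar>w 0 - (-1) ^ (2 * n) / (2 * (\<beta> + 1))\<bar> \<le> a"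
      for i
      using P by (simp add: w_def P_def)
    show "\<bar>w i\<bar> \<le> a" for i
      using a' P by (simp add: w_def)
  qed (rule a)
  moreover have "inj F"
  proof (rule injI)
    have "F n (2 * n + 1) \<noteq> F n' (2 * n + 1)" if "n < n'" for n n'
      using that by (simp add: F_def c_def d_def)
    then show "n = n'" if "F n = F n'" for n n'
      using that by (metis linorder_neqE_nat)
  qed
  ultimately show ?thesis
    using inj_on_finite[of F UNIV "S_bm \<beta> m"] by auto
qed

section \<open>The thresholds\<close>

lemma quadratic_nonpos_iff_le_root:
  fixes b c x :: real
  assumes "0 \<le> c" and "b \<le> 2 * x"
  shows "x\<^sup>2 - b * x - c \<le> 0 \<longleftrightarrow> x \<le> (b + sqrt (b\<^sup>2 + 4 * c)) / 2"
proof -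
  have "(2 * x - b)\<^sup>2 - (b\<^sup>2 + 4 * c) = 4 * (x\<^sup>2 - b * x - c)"
    by (simp add: power2_eq_square algebra_simps)
  then have "x\<^sup>2 - b * x - c \<le> 0 \<longleftrightarrow> (2 * x - b)\<^sup>2 \<le> b\<^sup>2 + 4 * c"
    by (smt (verit))
  also have "\<dots> \<longleftrightarrow> \<bar>2 * x - b\<bar> \<le> sqrt (b\<^sup>2 + 4 * c)"
    by (metis real_sqrt_abs real_sqrt_le_iff)
  also have "\<dots> \<longleftrightarrow> x \<le> (b + sqrt (b\<^sup>2 + 4 * c)) / 2"
    using assms(2) by (simp add: abs_of_nonneg) (smt (verit))
  finally show ?thesis .
qed

lemma le_quadratic_root:
  fixes b c :: real
  assumes "0 \<le> c"
  shows "b \<le> (b + sqrt (b\<^sup>2 + 4 * c)) / 2"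
proof -
  have "b \<le> sqrt (b\<^sup>2)" by simp
  also have "\<dots> \<le> sqrt (b\<^sup>2 + 4 * c)" using assms by (intro real_sqrt_le_mono) simp
  finally show ?thesis by simp
qed

lemma cubic_neg_below:
  fixes k x :: real
  assumes "0 \<le> k" and "x \<le> k + 1"
  shows "x ^ 3 - (k + 2) * x\<^sup>2 + x - (k + 1) < 0"
proof -
  have "x ^ 3 - (k + 2) * x\<^sup>2 + x - (k + 1) = x\<^sup>2 * (x - (k + 1)) - x\<^sup>2 + (x - (k + 1))"
    by (simp add: power2_eq_square power3_eq_cube algebra_simps)
  moreover have "x\<^sup>2 * (x - (k + 1)) \<le> 0"
    using assms by (simp add: mult_nonneg_nonpos)
  moreover have "0 < x\<^sup>2 \<or> x - (k + 1) < 0"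
    using assms by auto
  ultimately show ?thesis
    using assms(2) zero_le_power2[of x] by linarith
qed

lemma cubic_strict_mono_above:
  fixes k x y :: real
  assumes "0 \<le> k" and "k + 1 \<le> x" and "x < y"
  shows "x ^ 3 - (k + 2) * x\<^sup>2 + x - (k + 1) < y ^ 3 - (k + 2) * y\<^sup>2 + y - (k + 1)"
proof -
  have "(y ^ 3 - (k + 2) * y\<^sup>2 + y - (k + 1)) - (x ^ 3 - (k + 2) * x\<^sup>2 + x - (k + 1))
      = (y - x) * (y * (y - (k + 1)) + x * (x - (k + 1)) + (x - 1) * (y - 1))"
    by (simp add: power2_eq_square power3_eq_cube algebra_simps)
  moreover have "0 < y * (y - (k + 1)) + x * (x - (k + 1)) + (x - 1) * (y - 1)"
    using assms by (intro add_pos_nonneg add_nonneg_nonneg mult_nonneg_nonneg mult_pos_pos) auto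
  ultimately show ?thesis
    using assms(3) by (smt (verit) mult_pos_pos)
qed

lemma cubic_unique_root:
  fixes k :: real
  assumes k: "0 \<le> k"
  obtains r where "k + 1 < r" and "{x. x ^ 3 - (k + 2) * x\<^sup>2 + x - (k + 1) = 0} = {r}"
    and "\<And>x. x ^ 3 - (k + 2) * x\<^sup>2 + x - (k + 1) \<le> 0 \<longleftrightarrow> x \<le> r"
proof -
  define p where "p x = x ^ 3 - (k + 2) * x\<^sup>2 + x - (k + 1)" for x :: real
  have "p (k + 2) = 1" by (simp add: p_def power2_eq_square power3_eq_cube algebra_simps)
  moreover have "p (k + 1) < 0" unfolding p_def by (rule cubic_neg_below[OF k]) simp
  ultimately obtain r where r: "k + 1 \<le> r" "p r = 0"
    using IVT[of p "k + 1" 0 "k + 2"] unfolding p_def by (force intro: continuous_intros)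
  have below: "p x < 0" if "x \<le> k + 1" for x
    using cubic_neg_below[OF k that] by (simp add: p_def)
  have mono: "p x < p y" if "k + 1 \<le> x" "x < y" for x y
    using cubic_strict_mono_above[OF k that] by (simp add: p_def)
  have r_gt: "k + 1 < r" using r below[of r] by (cases "r \<le> k + 1") auto
  have below_r: "p x < 0" if "x < r" for x
    using below[of x] mono[of x r] that r by (cases "x \<le> k + 1") auto
  have above_r: "0 < p x" if "r < x" for x
    using mono[of r x] that r r_gt by simp
  have "p x \<le> 0 \<longleftrightarrow> x \<le> r" for x
    using below_r[of x] above_r[of x] r by (cases x r rule: linorder_cases) auto
  moreover have "p x = 0 \<longleftrightarrow> x = r" for x
    using below_r[of x] above_r[of x] r by (cases x r rule: linorder_cases) auto
  ultimately show ?thesis using that r_gt by (auto simp: p_def)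
qed

lemma even_radius_thresholds:
  assumes m: "m = 2 * k" and b: "1 < \<beta>"
  shows "0 < unique_radius \<beta> m \<longleftrightarrow> real k + 1 < \<beta>"
    and "(\<beta> + 1) * unique_radius \<beta> m \<le> 1 \<longleftrightarrow> \<beta>\<^sup>2 - (real k + 1) * \<beta> - real k \<le> 0"
proof -
  have R: "(\<beta> - 1) * unique_radius \<beta> m = \<beta> - 1 - real k"
    using unique_radius_eq[OF b, of m] m by simp
  have "0 < unique_radius \<beta> m \<longleftrightarrow> 0 < (\<beta> - 1) * unique_radius \<beta> m"
    using b by (simp add: zero_less_mult_iff)
  then show "0 < unique_radius \<beta> m \<longleftrightarrow> real k + 1 < \<beta>"
    using R by (smt (verit))
  have scaled: "(\<beta> + 1) * unique_radius \<beta> m \<le> 1 \<longleftrightarrow>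
      (\<beta> - 1) * ((\<beta> + 1) * unique_radius \<beta> m) \<le> (\<beta> - 1) * 1"
    using b by simp
  have "(\<beta> - 1) * ((\<beta> + 1) * unique_radius \<beta> m)
      = (\<beta> + 1) * ((\<beta> - 1) * unique_radius \<beta> m)"
    by (simp add: algebra_simps)
  also have "\<dots> = \<beta>\<^sup>2 - (real k + 1) * \<beta> - real k + (\<beta> - 1)"
    unfolding R by (simp add: power2_eq_square algebra_simps)
  finally show "(\<beta> + 1) * unique_radius \<beta> m \<le> 1 \<longleftrightarrow>
      \<beta>\<^sup>2 - (real k + 1) * \<beta> - real k \<le> 0"
    using scaled by simp
qed

lemma odd_radius_thresholds:
  assumes m: "m = 2 * k + 1" and b: "1 < \<beta>"
  shows "1 < 2 * (\<beta> + 1) * unique_radius \<beta> m \<longleftrightarrow>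
      0 < \<beta>\<^sup>2 - (real k + 1) * \<beta> - (real k + 1)"
    and "2 * (\<beta>\<^sup>2 + 1) * unique_radius \<beta> m \<le> \<beta> + 1 \<longleftrightarrow>
      \<beta> ^ 3 - (real k + 2) * \<beta>\<^sup>2 + \<beta> - (real k + 1) \<le> 0"
proof -
  have R: "(\<beta> - 1) * (2 * unique_radius \<beta> m) = 2 * \<beta> - 3 - 2 * real k"
    using unique_radius_eq[OF b, of m] m by simp
  have scaled: "1 < 2 * (\<beta> + 1) * unique_radius \<beta> m \<longleftrightarrow>
      (\<beta> - 1) * 1 < (\<beta> - 1) * (2 * (\<beta> + 1) * unique_radius \<beta> m)"
    using b by simp
  have "(\<beta> - 1) * (2 * (\<beta> + 1) * unique_radius \<beta> m)
      = (\<beta> + 1) * ((\<beta> - 1) * (2 * unique_radius \<beta> m))"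
    by (simp add: algebra_simps)
  also have "\<dots> = 2 * (\<beta>\<^sup>2 - (real k + 1) * \<beta> - (real k + 1)) + (\<beta> - 1)"
    unfolding R by (simp add: power2_eq_square algebra_simps)
  finally show "1 < 2 * (\<beta> + 1) * unique_radius \<beta> m \<longleftrightarrow>
      0 < \<beta>\<^sup>2 - (real k + 1) * \<beta> - (real k + 1)"
    using scaled by (smt (verit))
  have scaled: "2 * (\<beta>\<^sup>2 + 1) * unique_radius \<beta> m \<le> \<beta> + 1 \<longleftrightarrow>
      (\<beta> - 1) * (2 * (\<beta>\<^sup>2 + 1) * unique_radius \<beta> m) \<le> (\<beta> - 1) * (\<beta> + 1)"
    using b by simp
  have "(\<beta> - 1) * (2 * (\<beta>\<^sup>2 + 1) * unique_radius \<beta> m)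
      = (\<beta>\<^sup>2 + 1) * ((\<beta> - 1) * (2 * unique_radius \<beta> m))"
    by (simp add: algebra_simps)
  also have "\<dots>
      = 2 * (\<beta> ^ 3 - (real k + 2) * \<beta>\<^sup>2 + \<beta> - (real k + 1)) + (\<beta> - 1) * (\<beta> + 1)"
    unfolding R by (simp add: power2_eq_square power3_eq_cube algebra_simps)
  finally show "2 * (\<beta>\<^sup>2 + 1) * unique_radius \<beta> m \<le> \<beta> + 1 \<longleftrightarrow>
      \<beta> ^ 3 - (real k + 2) * \<beta>\<^sup>2 + \<beta> - (real k + 1) \<le> 0"
    using scaled by (smt (verit))
qed

lemma S_bm_regimes_even:
  assumes m: "m = 2 * k" and k: "1 \<le> k"
  shows "(\<forall>\<beta>. G_m m < \<beta> \<and> \<beta> \<le> beta_f m \<longrightarrow> S_bm \<beta> m = {\<lambda>_. k})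
    \<and> (\<forall>\<beta>. beta_f m < \<beta> \<and> \<beta> \<le> real m + 1 \<longrightarrow> infinite (S_bm \<beta> m))"
proof -
  define \<rho> where "\<rho> = (real k + 1 + sqrt ((real k + 1)\<^sup>2 + 4 * real k)) / 2"
  have "(real k)\<^sup>2 + 6 * real k + 1 = (real k + 1)\<^sup>2 + 4 * real k"
    by (simp add: power2_eq_square algebra_simps)
  then have G: "G_m m = real k + 1" and bf: "beta_f m = \<rho>"
    using m by (simp_all add: G_m_def beta_f_def \<rho>_def Let_def)
  have \<rho>: "real k + 1 \<le> \<rho>"
    unfolding \<rho>_def by (rule le_quadratic_root) simp
  have quad: "\<beta>\<^sup>2 - (real k + 1) * \<beta> - real k \<le> 0 \<longleftrightarrow> \<beta> \<le> \<rho>"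
    if "real k + 1 \<le> 2 * \<beta>" for \<beta>
    unfolding \<rho>_def by (rule quadratic_nonpos_iff_le_root) (use that in simp_all)
  show ?thesis
  proof (intro conjI allI impI)
    fix \<beta> assume \<beta>: "G_m m < \<beta> \<and> \<beta> \<le> beta_f m"
    then have b: "1 < \<beta>" and "real k + 1 < \<beta>" using G by simp_all
    then have "0 < unique_radius \<beta> m" using even_radius_thresholds(1)[OF m b] by simp
    moreover have "(\<beta> + 1) * unique_radius \<beta> m \<le> 1"
      using even_radius_thresholds(2)[OF m b] quad[of \<beta>] \<beta> bf \<open>real k + 1 < \<beta>\<close> by simp
    ultimately show "S_bm \<beta> m = {\<lambda>_. k}" by (rule S_bm_eq_constant[OF m b])
  next
    fix \<beta> assume \<beta>: "beta_f m < \<beta> \<and> \<beta> \<le> real m + 1"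
    then have b: "1 < \<beta>" and "real k + 1 < \<beta>" using \<rho> bf by simp_all
    then have "1 < (\<beta> + 1) * unique_radius \<beta> m"
      using even_radius_thresholds(2)[OF m b] quad[of \<beta>] \<beta> bf by simp
    then show "infinite (S_bm \<beta> m)" using infinite_S_bm_even[OF m k b] \<beta> by simp
  qed
qed

lemma S_bm_regimes_odd:
  assumes m: "m = 2 * k + 1"
  shows "(\<forall>\<beta>. G_m m < \<beta> \<and> \<beta> \<le> beta_f m \<longrightarrow>
      S_bm \<beta> m = {\<lambda>i. if even i then k + 1 else k, \<lambda>i. if even i then k else k + 1})
    \<and> (\<forall>\<beta>. beta_f m < \<beta> \<and> \<beta> \<le> real m + 1 \<longrightarrow> infinite (S_bm \<beta> m))"
proof -
  define \<rho> where "\<rho> = (real k + 1 + sqrt ((real k + 1)\<^sup>2 + 4 * (real k + 1))) / 2"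
  obtain r where r: "real k + 1 < r"
      "{x. x ^ 3 - (real k + 2) * x\<^sup>2 + x - (real k + 1) = 0} = {r}"
    and cubic: "\<And>x. x ^ 3 - (real k + 2) * x\<^sup>2 + x - (real k + 1) \<le> 0 \<longleftrightarrow> x \<le> r"
    using cubic_unique_root[of "real k"] by auto
  have "(real k)\<^sup>2 + 6 * real k + 5 = (real k + 1)\<^sup>2 + 4 * (real k + 1)"
    by (simp add: power2_eq_square algebra_simps)
  then have G: "G_m m = \<rho>" and bf: "beta_f m = r"
    using m r(2) by (simp_all add: G_m_def beta_f_def \<rho>_def Let_def)
  have \<rho>: "real k + 1 \<le> \<rho>"
    unfolding \<rho>_def by (rule le_quadratic_root) simp
  have quad: "\<beta>\<^sup>2 - (real k + 1) * \<beta> - (real k + 1) \<le> 0 \<longleftrightarrow> \<beta> \<le> \<rho>"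
    if "real k + 1 \<le> 2 * \<beta>" for \<beta>
    unfolding \<rho>_def by (rule quadratic_nonpos_iff_le_root) (use that in simp_all)
  show ?thesis
  proof (intro conjI allI impI)
    fix \<beta> assume \<beta>: "G_m m < \<beta> \<and> \<beta> \<le> beta_f m"
    then have b: "1 < \<beta>" and "real k + 1 < \<beta>" using G \<rho> by simp_all
    then have "1 < 2 * (\<beta> + 1) * unique_radius \<beta> m"
      using odd_radius_thresholds(1)[OF m b] quad[of \<beta>] \<beta> G by simp
    moreover have "2 * (\<beta>\<^sup>2 + 1) * unique_radius \<beta> m \<le> \<beta> + 1"
      using odd_radius_thresholds(2)[OF m b] cubic[of \<beta>] \<beta> bf by simp
    ultimately show
      "S_bm \<beta> m = {\<lambda>i. if even i then k + 1 else k, \<lambda>i. if even i then k else k + 1}"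
      by (rule S_bm_eq_alternating[OF m b])
  next
    fix \<beta> assume \<beta>: "beta_f m < \<beta> \<and> \<beta> \<le> real m + 1"
    then have b: "1 < \<beta>" using r bf by simp
    have "\<beta> + 1 < 2 * (\<beta>\<^sup>2 + 1) * unique_radius \<beta> m"
      using odd_radius_thresholds(2)[OF m b] cubic[of \<beta>] \<beta> bf by simp
    then show "infinite (S_bm \<beta> m)" using infinite_S_bm_odd[OF m b] \<beta> by simp
  qed
qed

theorem proposition4p7:
  fixes m :: nat
  assumes "m \<ge> 2"
  shows "(\<forall>\<beta>. G_m m < \<beta> \<and> \<beta> \<le> beta_f m \<longrightarrow>
            card (S_bm \<beta> m) = (if even m then 1 else 2))
       \<and> (\<forall>\<beta>. beta_f m < \<beta> \<and> \<beta> \<le> real m + 1 \<longrightarrow> infinite (S_bm \<beta> m))"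
proof (cases "even m")
  case True
  then obtain k where m: "m = 2 * k" by (auto elim: evenE)
  with assms have "1 \<le> k" by simp
  with S_bm_regimes_even[OF m] True show ?thesis by simp
next
  case False
  then obtain k where m: "m = 2 * k + 1" by (auto elim: oddE)
  have "(\<lambda>i :: nat. if even i then k + 1 else k) \<noteq> (\<lambda>i. if even i then k else k + 1)"
    by (auto dest: fun_cong[where x = 0])
  with S_bm_regimes_odd[OF m] False show ?thesis by simp
qed

end
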